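(* Let $G$ be a finite discounted stochastic game and let $\epsilon > 0$. There exists $\xi = \xi(\epsilon, G) > 0$ such that, whenever $\bm{\Pi} = \times_{i\in\mathcal{N}}\Pi^i$ with $\Pi^i \subset \Delta^i$ finite is a quantization of $\bm{\Delta}$ into bins of radius no greater than $\xi$ (i.e. every $\bm{\gamma}\in\bm{\Delta}$ lies within $d$-distance $\xi$ of some element of $\bm{\Pi}$), we have $\bm{\Pi} \cap \bm{\Delta}^{\epsilon}_{\rm eq} \neq \varnothing$.
   Context: A finite discounted stochastic game is $G = (\mathcal{N}, \mathbb{X}, \{\mathbb{U}^i\}, \{c^i\}, \{\beta^i\}, P, \nu_0)$, with finite player set $\mathcal{N}$, finite state set $\mathbb{X}$, finite action sets $\mathbb{U}^i$, joint action set $\textbf{U}=\times_i\mathbb{U}^i$, stage costs $c^i:\mathbb{X}\times\textbf{U}\to\mathbb{R}$, discount factors $\beta^i\in[0,1)$, transition kernel $P(\cdot\mid x,\textbf{u})$ and initial distribution $\nu_0$. A stationary policy of player $i$ is a stochastic kernel $\gamma^i$ from $\mathbb{X}$ to $\mathbb{U}^i$; $\Delta^i$ is the set of these, $\bm{\Delta}=\times_i\Delta^i$, with metric $d(\bm{\gamma},\bm{\pi}) = \max\{|\gamma^i(a^i\mid s)-\pi^i(a^i\mid s)| : i, a^i, s\}$. Player $i$'s cost is $J^i_x(\bm{\gamma}) = E^{\bm{\gamma}}[\sum_{t\ge0}(\beta^i)^t c^i(x_t,\textbf{u}_t)\mid x_0=x]$. $\gamma^i$ is an $\epsilon$-best-response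 to $\bm{\gamma}^{-i}=(\gamma^j)_{j\ne i}$ if $J^i_x(\gamma^i,\bm{\gamma}^{-i})\le\inf_{\pi^i\in\Delta^i}J^i_x(\pi^i,\bm{\gamma}^{-i})+\epsilon$ for all $x$; $\bm{\Delta}^\epsilon_{\rm eq}$ is the set of joint policies in which every player is $\epsilon$-best-responding. *)

theory Defs
  imports "HOL-Analysis.Analysis" "HOL-Library.FuncSet"
begin

text \<open>Players: finite type 'i. States: finite type 'x. Actions of player i: finite nonempty
  set U i of a common action type 'a. Transition kernel P s u y, stage costs c i s u, discount factors beta i.
  (The initial distribution plays no role in the statement.)\<close>

definition joint_actions :: "('i \<Rightarrow> 'a set) \<Rightarrow> ('i \<Rightarrow> 'a) set" where
  "joint_actions U = Pi\<^sub>E UNIV U"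

definition valid_game ::
  "('i::finite \<Rightarrow> 'a set) \<Rightarrow> ('x::finite \<Rightarrow> ('i \<Rightarrow> 'a) \<Rightarrow> 'x \<Rightarrow> real)
   \<Rightarrow> ('i \<Rightarrow> real) \<Rightarrow> bool" where
  "valid_game U P beta \<longleftrightarrow>
     (\<forall>i. finite (U i) \<and> U i \<noteq> {}) \<and>
     (\<forall>s u y. P s u y \<ge> 0) \<and>
     (\<forall>s. \<forall>u\<in>joint_actions U. (\<Sum>y\<in>UNIV. P s u y) = 1) \<and>
     (\<forall>i. 0 \<le> beta i \<and> beta i < 1)"

text \<open>Stationary policies of player i: stochastic kernels from states to U i
  (represented as functions vanishing outside U i).\<close>
definition policies :: "('i \<Rightarrow> 'a set) \<Rightarrow> 'i \<Rightarrow> ('x \<Rightarrow> 'a \<Rightarrow> real) set" where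
  "policies U i = {g. (\<forall>s a. g s a \<ge> 0) \<and> (\<forall>s a. a \<notin> U i \<longrightarrow> g s a = 0)
                     \<and> (\<forall>s. (\<Sum>a\<in>U i. g s a) = 1)}"

definition joint_policies :: "('i \<Rightarrow> 'a set) \<Rightarrow> ('i \<Rightarrow> 'x \<Rightarrow> 'a \<Rightarrow> real) set" where
  "joint_policies U = {\<gamma>. \<forall>i. \<gamma> i \<in> policies U i}"

definition pol_dist :: "('i \<Rightarrow> 'a set) \<Rightarrow> ('i \<Rightarrow> 'x \<Rightarrow> 'a \<Rightarrow> real)
                        \<Rightarrow> ('i \<Rightarrow> 'x \<Rightarrow> 'a \<Rightarrow> real) \<Rightarrow> real" where
  "pol_dist U \<gamma> \<pi> = Max {\<bar>\<gamma> i s a - \<pi> i s a\<bar> | i s a. a \<in> U i}"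

text \<open>Probability of joint action u at state s under joint policy (independent randomization).\<close>
definition act_prob :: "('i::finite \<Rightarrow> 'x \<Rightarrow> 'a \<Rightarrow> real) \<Rightarrow> 'x \<Rightarrow> ('i \<Rightarrow> 'a) \<Rightarrow> real" where
  "act_prob \<gamma> s u = (\<Prod>i\<in>UNIV. \<gamma> i s (u i))"

primrec state_dist ::
  "('i::finite \<Rightarrow> 'a set) \<Rightarrow> ('x::finite \<Rightarrow> ('i \<Rightarrow> 'a) \<Rightarrow> 'x \<Rightarrow> real)
   \<Rightarrow> ('i \<Rightarrow> 'x \<Rightarrow> 'a \<Rightarrow> real) \<Rightarrow> 'x \<Rightarrow> nat \<Rightarrow> 'x \<Rightarrow> real" where
  "state_dist U P \<gamma> x 0 = (\<lambda>y. if y = x then 1 else 0)"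
| "state_dist U P \<gamma> x (Suc t) = (\<lambda>y. \<Sum>s\<in>UNIV. state_dist U P \<gamma> x t s *
       (\<Sum>u\<in>joint_actions U. act_prob \<gamma> s u * P s u y))"

definition exp_stage_cost ::
  "('i::finite \<Rightarrow> 'a set) \<Rightarrow> ('x::finite \<Rightarrow> ('i \<Rightarrow> 'a) \<Rightarrow> 'x \<Rightarrow> real)
   \<Rightarrow> ('i \<Rightarrow> 'x \<Rightarrow> ('i \<Rightarrow> 'a) \<Rightarrow> real) \<Rightarrow> 'i \<Rightarrow> 'x \<Rightarrow> ('i \<Rightarrow> 'x \<Rightarrow> 'a \<Rightarrow> real) \<Rightarrow> nat \<Rightarrow> real" where
  "exp_stage_cost U P c i x \<gamma> t =
     (\<Sum>s\<in>UNIV. state_dist U P \<gamma> x t s * (\<Sum>u\<in>joint_actions U. act_prob \<gamma> s u * c i s u))"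

text \<open>J^i_x(gamma) = E[sum_t beta_i^t c^i(x_t,u_t) | x_0 = x] = sum_t beta_i^t E[c^i(x_t,u_t)].\<close>
definition cost_J ::
  "('i::finite \<Rightarrow> 'a set) \<Rightarrow> ('x::finite \<Rightarrow> ('i \<Rightarrow> 'a) \<Rightarrow> 'x \<Rightarrow> real)
   \<Rightarrow> ('i \<Rightarrow> 'x \<Rightarrow> ('i \<Rightarrow> 'a) \<Rightarrow> real) \<Rightarrow> ('i \<Rightarrow> real) \<Rightarrow> 'i \<Rightarrow> 'x
   \<Rightarrow> ('i \<Rightarrow> 'x \<Rightarrow> 'a \<Rightarrow> real) \<Rightarrow> real" where
  "cost_J U P c beta i x \<gamma> = (\<Sum>t. beta i ^ t * exp_stage_cost U P c i x \<gamma> t)"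

definition eps_best_response ::
  "('i::finite \<Rightarrow> 'a set) \<Rightarrow> ('x::finite \<Rightarrow> ('i \<Rightarrow> 'a) \<Rightarrow> 'x \<Rightarrow> real)
   \<Rightarrow> ('i \<Rightarrow> 'x \<Rightarrow> ('i \<Rightarrow> 'a) \<Rightarrow> real) \<Rightarrow> ('i \<Rightarrow> real) \<Rightarrow> real \<Rightarrow> 'i
   \<Rightarrow> ('i \<Rightarrow> 'x \<Rightarrow> 'a \<Rightarrow> real) \<Rightarrow> bool" where
  "eps_best_response U P c beta \<epsilon> i \<gamma> \<longleftrightarrow>
     (\<forall>x. cost_J U P c beta i x \<gamma> \<le>
            (INF \<pi>\<in>policies U i. cost_J U P c beta i x (\<gamma>(i := \<pi>))) + \<epsilon>)"

definition eps_equilibria ::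
  "('i::finite \<Rightarrow> 'a set) \<Rightarrow> ('x::finite \<Rightarrow> ('i \<Rightarrow> 'a) \<Rightarrow> 'x \<Rightarrow> real)
   \<Rightarrow> ('i \<Rightarrow> 'x \<Rightarrow> ('i \<Rightarrow> 'a) \<Rightarrow> real) \<Rightarrow> ('i \<Rightarrow> real) \<Rightarrow> real
   \<Rightarrow> ('i \<Rightarrow> 'x \<Rightarrow> 'a \<Rightarrow> real) set" where
  "eps_equilibria U P c beta \<epsilon> =
     {\<gamma>\<in>joint_policies U. \<forall>i. eps_best_response U P c beta \<epsilon> i \<gamma>}"

end

theory Submission
  imports Defs
begin

(* For temperatures theta i > 0 let the smoothed best response of player i put weight
   proportional to max 0 (min_b Q(b) + theta i - Q(a)) on action a, where Q is its state-action
   value against the current joint policy. Values are Lipschitz in the joint policy (the Bellman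
   operator is a contraction), hence so is this map; by Kuhn's lemma it has approximate fixed
   points, and by the comparison principle for the Bellman operator an approximate fixed point is
   an epsilon/2-equilibrium. Finally, every joint policy within xi of an epsilon/2-equilibrium is an
   epsilon-equilibrium once 2 * xi times the Lipschitz constant of the values is at most epsilon/2,
   and a quantization of radius xi contains such a policy. *)

section \<open>Elementary estimates and approximate fixed points\<close>

lemma abs_prod_diff_le:
  fixes a b :: "'k \<Rightarrow> real" and d :: real
  assumes "finite I" "\<forall>i\<in>I. a i \<in> {0..1}" "\<forall>i\<in>I. b i \<in> {0..1}" "\<forall>i\<in>I. \<bar>a i - b i\<bar> \<le> d"
  shows "\<bar>prod a I - prod b I\<bar> \<le> real (card I) * d"
  using assms
proof (induction I rule: finite_induct)
  case (insert x F)
  have a: "0 \<le> prod a F" "prod a F \<le> 1" and b: "0 \<le> b x" "b x \<le> 1"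
    using insert.prems by (auto intro: prod_nonneg prod_le_1)
  have "prod a (insert x F) - prod b (insert x F) = (a x - b x) * prod a F + b x * (prod a F - prod b F)"
    using insert.hyps by (simp add: algebra_simps)
  also have "\<bar>\<dots>\<bar> \<le> \<bar>a x - b x\<bar> * prod a F + b x * \<bar>prod a F - prod b F\<bar>"
    using abs_triangle_ineq[of "(a x - b x) * prod a F" "b x * (prod a F - prod b F)"] a b
    by (simp add: abs_mult)
  also have "\<dots> \<le> d * 1 + 1 * (real (card F) * d)"
  proof -
    have dx: "\<bar>a x - b x\<bar> \<le> d" using insert.prems(3) by simp
    have "\<bar>prod a F - prod b F\<bar> \<le> real (card F) * d" using insert by simp
    with dx a b show ?thesis by (intro add_mono mult_mono) auto
  qed
  also have "\<dots> = real (card (insert x F)) * d"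
    using insert.hyps by (simp add: algebra_simps)
  finally show ?case .
qed simp

lemma abs_Min_image_diff_le:
  fixes f g :: "'b \<Rightarrow> real"
  assumes "finite A" "A \<noteq> {}" "\<And>a. a \<in> A \<Longrightarrow> \<bar>f a - g a\<bar> \<le> e"
  shows "\<bar>Min (f ` A) - Min (g ` A)\<bar> \<le> e"
proof -
  have "Min (f ` A) \<in> f ` A" "Min (g ` A) \<in> g ` A"
    using assms(1,2) by (intro Min_in; simp)+
  then obtain a b where "a \<in> A" "Min (f ` A) = f a" "b \<in> A" "Min (g ` A) = g b"
    by blast
  moreover have "Min (f ` A) \<le> f b" "Min (g ` A) \<le> g a"
    using assms(1) \<open>a \<in> A\<close> \<open>b \<in> A\<close> by auto
  ultimately show ?thesis using assms(3)[of a] assms(3)[of b] by linarith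
qed

lemma abs_divide_diff_le:
  fixes w w' S S' \<theta> :: real
  assumes "0 \<le> w'" "w' \<le> S'" "0 < \<theta>" "\<theta> \<le> S" "\<theta> \<le> S'"
  shows "\<bar>w / S - w' / S'\<bar> \<le> (\<bar>w - w'\<bar> + \<bar>S - S'\<bar>) / \<theta>"
proof -
  have "w / S - w' / S' = ((w - w') + (w' / S') * (S' - S)) / S"
    using assms by (simp add: field_simps)
  also have "\<bar>\<dots>\<bar> = \<bar>(w - w') + (w' / S') * (S' - S)\<bar> / S"
    using assms by (simp add: abs_divide)
  also have "\<dots> \<le> (\<bar>w - w'\<bar> + 1 * \<bar>S' - S\<bar>) / S"
  proof (intro divide_right_mono)
    have "\<bar>w' / S'\<bar> * \<bar>S' - S\<bar> \<le> \<bar>S' - S\<bar>"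
      using assms by (intro mult_left_le_one_le) auto
    then show "\<bar>(w - w') + (w' / S') * (S' - S)\<bar> \<le> \<bar>w - w'\<bar> + 1 * \<bar>S' - S\<bar>"
      using abs_triangle_ineq[of "w - w'" "(w' / S') * (S' - S)"] by (simp only: abs_mult)
  qed (use assms in simp)
  also have "\<dots> \<le> (\<bar>w - w'\<bar> + \<bar>S - S'\<bar>) / \<theta>"
    using assms by (simp add: abs_minus_commute divide_left_mono)
  finally show ?thesis .
qed

lemma le_divide_one_minus:
  fixes B C b :: real
  assumes "B \<le> C + b * B" "b < 1"
  shows "B \<le> C / (1 - b)"
  using assms by (simp add: pos_le_divide_eq algebra_simps)

lemma exists_pos_mult_le:
  fixes K \<theta> :: "'i::finite \<Rightarrow> real"
  assumes "\<And>i. 0 < \<theta> i"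
  shows "\<exists>\<xi>>0. \<forall>i. K i * \<xi> \<le> \<theta> i"
proof -
  define \<xi> where "\<xi> = Min (range (\<lambda>i. \<theta> i / (\<bar>K i\<bar> + 1)))"
  have "\<xi> > 0" unfolding \<xi>_def using assms by (subst Min_gr_iff) auto
  moreover have "K i * \<xi> \<le> \<theta> i" for i
  proof -
    have "\<xi> \<le> \<theta> i / (\<bar>K i\<bar> + 1)" unfolding \<xi>_def by (rule Min_le) auto
    then have "(\<bar>K i\<bar> + 1) * \<xi> \<le> \<theta> i" by (simp add: le_divide_eq mult.commute)
    moreover have "K i * \<xi> \<le> (\<bar>K i\<bar> + 1) * \<xi>" using \<open>\<xi> > 0\<close> by (intro mult_right_mono) auto
    ultimately show ?thesis by linarith
  qed
  ultimately show ?thesis by blast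
qed

lemma approx_fixpoint_nat_cube:
  fixes f :: "(nat \<Rightarrow> real) \<Rightarrow> nat \<Rightarrow> real" and L \<eta> :: real
  assumes maps: "\<And>x. \<forall>i<n. x i \<in> {0..1} \<Longrightarrow> \<forall>i<n. f x i \<in> {0..1}"
    and lip: "\<And>x y d. \<forall>i<n. x i \<in> {0..1} \<Longrightarrow> \<forall>i<n. y i \<in> {0..1} \<Longrightarrow>
                \<forall>i<n. \<bar>x i - y i\<bar> \<le> d \<Longrightarrow> \<forall>i<n. \<bar>f x i - f y i\<bar> \<le> L * d"
    and "L \<ge> 0" and "\<eta> > 0"
  shows "\<exists>z. (\<forall>i<n. z i \<in> {0..1}) \<and> (\<forall>i<n. \<bar>f z i - z i\<bar> \<le> \<eta>)"
proof -
  obtain p :: nat where p: "p > 0" and mesh: "(L + 1) / p \<le> \<eta>"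
  proof -
    obtain m :: nat where "(L + 1) / \<eta> \<le> m" using real_arch_simple by blast
    then have "(L + 1) / Suc m \<le> \<eta>"
      using \<open>\<eta> > 0\<close> \<open>L \<ge> 0\<close> by (simp add: field_simps)
    then show thesis by (intro that[of "Suc m"]) auto
  qed
  define grid :: "(nat \<Rightarrow> nat) \<Rightarrow> nat \<Rightarrow> real" where "grid q j = q j / p" for q j
  define label :: "(nat \<Rightarrow> nat) \<Rightarrow> nat \<Rightarrow> nat" where
    "label q i = (if grid q i \<le> f (grid q) i \<and> grid q i \<noteq> 1 then 0 else 1)" for q i
  have grid_cube: "\<forall>j<n. grid q j \<in> {0..1}" if "\<forall>j<n. q j \<le> p" for q
    using that p by (auto simp: grid_def)
  obtain q where q_lt: "\<forall>i<n. q i < p"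
    and q_cell: "\<forall>i<n. \<exists>r s. (\<forall>j<n. q j \<le> r j \<and> r j \<le> q j + 1) \<and>
                 (\<forall>j<n. q j \<le> s j \<and> s j \<le> q j + 1) \<and> label r i \<noteq> label s i"
  proof (rule kuhn_lemma[OF p, of n label])
    show "\<forall>x. (\<forall>i<n. x i \<le> p) \<longrightarrow> (\<forall>i<n. x i = 0 \<longrightarrow> label x i = 0)"
      using maps grid_cube by (auto simp: label_def grid_def)
    show "\<forall>x. (\<forall>i<n. x i \<le> p) \<longrightarrow> (\<forall>i<n. x i = p \<longrightarrow> label x i = 1)"
      using p by (auto simp: label_def grid_def)
  qed (auto simp: label_def)
  define cell where "cell t \<longleftrightarrow> (\<forall>j<n. q j \<le> t j \<and> t j \<le> q j + 1)" for t
  define z where "z = grid q"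
  have z_cube: "\<forall>j<n. z j \<in> {0..1}"
    unfolding z_def using q_lt by (intro grid_cube) (simp add: less_imp_le)
  have cell_cube: "\<forall>j<n. grid t j \<in> {0..1}" if "cell t" for t
    using that q_lt by (intro grid_cube) (fastforce simp: cell_def)
  have cell_near: "\<forall>j<n. \<bar>grid t j - z j\<bar> \<le> 1 / p" if "cell t" for t
  proof (intro allI impI)
    fix j assume "j < n"
    then have "\<bar>real (t j) - real (q j)\<bar> \<le> 1" using that by (auto simp: cell_def)
    then show "\<bar>grid t j - z j\<bar> \<le> 1 / p"
      using p by (simp add: z_def grid_def diff_divide_distrib[symmetric] divide_right_mono)
  qed
  have label0: "grid t i \<le> f (grid t) i" if "label t i = 0" for t i
    using that by (auto simp: label_def split: if_splits)
  have label1: "f (grid t) i \<le> grid t i" if "label t i = 1" "cell t" "i < n" for t i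
    using that maps[OF cell_cube] by (fastforce simp: label_def split: if_splits)
  text \<open>Between two vertices of the cell, \<open>f x i - x i\<close> changes sign; both vertices are within
    \<open>1/p\<close> of \<open>z\<close>, so \<open>\<bar>f z i - z i\<bar> \<le> (L + 1)/p\<close>.\<close>
  have crossing: "\<bar>f z i - z i\<bar> \<le> \<eta>"
    if "i < n" "cell r" "cell s" "grid r i \<le> f (grid r) i" "f (grid s) i \<le> grid s i" for i r s
  proof -
    have "\<bar>f (grid t) i - f z i\<bar> \<le> L * (1 / p)" "\<bar>grid t i - z i\<bar> \<le> 1 / p" if "cell t" for t
      using lip[OF cell_cube[OF that] z_cube cell_near[OF that]] cell_near[OF that] \<open>i < n\<close> by auto
    from this[OF \<open>cell r\<close>] this[OF \<open>cell s\<close>]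
    have "\<bar>f z i - z i\<bar> \<le> (L + 1) / p"
      using that(4,5) by (simp add: add_divide_distrib)
    then show ?thesis using mesh by linarith
  qed
  have "\<bar>f z i - z i\<bar> \<le> \<eta>" if "i < n" for i
  proof -
    obtain r s where "cell r" "cell s" "label r i \<noteq> label s i"
      using q_cell \<open>i < n\<close> unfolding cell_def by blast
    moreover have "label t i = 0 \<or> label t i = 1" for t by (simp add: label_def)
    ultimately show ?thesis
      using crossing[OF \<open>i < n\<close>] label0 label1[OF _ _ \<open>i < n\<close>] by metis
  qed
  then show ?thesis using z_cube by blast
qed

lemma approx_fixpoint_unit_cube:
  fixes f :: "('t \<Rightarrow> real) \<Rightarrow> 't \<Rightarrow> real" and L \<eta> :: real
  assumes "finite T"
    and maps: "\<And>x. \<forall>t\<in>T. x t \<in> {0..1} \<Longrightarrow> \<forall>t\<in>T. f x t \<in> {0..1}"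
    and lip: "\<And>x y d. \<forall>t\<in>T. x t \<in> {0..1} \<Longrightarrow> \<forall>t\<in>T. y t \<in> {0..1} \<Longrightarrow>
                \<forall>t\<in>T. \<bar>x t - y t\<bar> \<le> d \<Longrightarrow> \<forall>t\<in>T. \<bar>f x t - f y t\<bar> \<le> L * d"
    and "L \<ge> 0" and "\<eta> > 0"
  shows "\<exists>z. (\<forall>t\<in>T. z t \<in> {0..1}) \<and> (\<forall>t\<in>T. \<bar>f z t - z t\<bar> \<le> \<eta>)"
proof -
  obtain e where e: "bij_betw e {..<card T} T"
    using ex_bij_betw_nat_finite[OF \<open>finite T\<close>] by (auto simp: atLeast0LessThan)
  define e' where "e' = inv_into {..<card T} e"
  have e_in: "e k \<in> T" if "k < card T" for k using e that by (auto simp: bij_betw_def)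
  have e'_lt: "e' t < card T" if "t \<in> T" for t
    using bij_betw_inv_into[OF e] that unfolding e'_def bij_betw_def by auto
  have e_e': "e (e' t) = t" if "t \<in> T" for t
    using e that unfolding e'_def by (meson bij_betw_inv_into_right)
  define pull :: "(nat \<Rightarrow> real) \<Rightarrow> 't \<Rightarrow> real" where "pull y t = y (e' t)" for y t
  have pull_cube: "\<forall>t\<in>T. pull y t \<in> {0..1}" if "\<forall>k<card T. y k \<in> {0..1}" for y
    using that e'_lt by (simp add: pull_def)
  obtain y where y: "\<forall>k<card T. y k \<in> {0..1}" "\<forall>k<card T. \<bar>f (pull y) (e k) - y k\<bar> \<le> \<eta>"
  proof -
    have "\<exists>y. (\<forall>k<card T. y k \<in> {0..1}) \<and> (\<forall>k<card T. \<bar>f (pull y) (e k) - y k\<bar> \<le> \<eta>)"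
    proof (rule approx_fixpoint_nat_cube[OF _ _ \<open>L \<ge> 0\<close> \<open>\<eta> > 0\<close>])
      show "\<forall>k<card T. f (pull x) (e k) \<in> {0..1}" if "\<forall>k<card T. x k \<in> {0..1}" for x
        using maps[OF pull_cube[OF that]] e_in by blast
      show "\<forall>k<card T. \<bar>f (pull x) (e k) - f (pull x') (e k)\<bar> \<le> L * d"
        if "\<forall>k<card T. x k \<in> {0..1}" "\<forall>k<card T. x' k \<in> {0..1}"
          "\<forall>k<card T. \<bar>x k - x' k\<bar> \<le> d" for x x' d
      proof -
        have "\<forall>t\<in>T. \<bar>pull x t - pull x' t\<bar> \<le> d" using that(3) e'_lt by (simp add: pull_def)
        then show ?thesis using lip[OF pull_cube[OF that(1)] pull_cube[OF that(2)]] e_in by blast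
      qed
    qed
    then show thesis using that by blast
  qed
  have "\<bar>f (pull y) t - pull y t\<bar> \<le> \<eta>" if "t \<in> T" for t
    using y(2) e'_lt[OF that] e_e'[OF that] by (force simp: pull_def)
  then show ?thesis using pull_cube[OF y(1)] by blast
qed

section \<open>Values of stationary policies\<close>

locale discounted_game =
  fixes U :: "'i::finite \<Rightarrow> 'a set"
    and P :: "'x::finite \<Rightarrow> ('i \<Rightarrow> 'a) \<Rightarrow> 'x \<Rightarrow> real"
    and c :: "'i \<Rightarrow> 'x \<Rightarrow> ('i \<Rightarrow> 'a) \<Rightarrow> real"
    and beta :: "'i \<Rightarrow> real"
  assumes valid: "valid_game U P beta"
begin

abbreviation JA :: "('i \<Rightarrow> 'a) set" where "JA \<equiv> joint_actions U"
abbreviation JP :: "('i \<Rightarrow> 'x \<Rightarrow> 'a \<Rightarrow> real) set" where "JP \<equiv> joint_policies U"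
abbreviation J :: "'i \<Rightarrow> ('i \<Rightarrow> 'x \<Rightarrow> 'a \<Rightarrow> real) \<Rightarrow> 'x \<Rightarrow> real" where
  "J i \<gamma> x \<equiv> cost_J U P c beta i x \<gamma>"

lemma finite_actions: "finite (U i)"
  and actions_nonempty: "U i \<noteq> {}"
  and trans_nonneg: "0 \<le> P s u y"
  and trans_sum: "u \<in> JA \<Longrightarrow> (\<Sum>y\<in>UNIV. P s u y) = 1"
  and beta_nonneg: "0 \<le> beta i"
  and beta_less_1: "beta i < 1"
  using valid unfolding valid_game_def by auto

lemma finite_joint_actions: "finite JA"
  unfolding joint_actions_def using finite_actions by (intro finite_PiE) auto

lemma joint_action_mem: "u \<in> JA \<Longrightarrow> u i \<in> U i"
  unfolding joint_actions_def by auto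

lemma policy_nonneg: "g \<in> policies U i \<Longrightarrow> 0 \<le> g s a"
  and policy_outside: "g \<in> policies U i \<Longrightarrow> a \<notin> U i \<Longrightarrow> g s a = 0"
  and policy_sum: "g \<in> policies U i \<Longrightarrow> (\<Sum>a\<in>U i. g s a) = 1"
  unfolding policies_def by auto

lemma policy_le_1:
  assumes "g \<in> policies U i"
  shows "g s a \<le> 1"
proof (cases "a \<in> U i")
  case True
  then have "g s a \<le> (\<Sum>b\<in>U i. g s b)"
    using policy_nonneg[OF assms] finite_actions by (intro member_le_sum) auto
  then show ?thesis using policy_sum[OF assms] by simp
qed (simp add: policy_outside[OF assms])

lemma joint_policy_mem: "\<gamma> \<in> JP \<Longrightarrow> \<gamma> i \<in> policies U i"
  unfolding joint_policies_def by auto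

lemma joint_policy_fun_upd: "\<gamma> \<in> JP \<Longrightarrow> \<pi> \<in> policies U i \<Longrightarrow> \<gamma>(i := \<pi>) \<in> JP"
  unfolding joint_policies_def by auto

lemma joint_policy_unit_interval: "\<gamma> \<in> JP \<Longrightarrow> \<gamma> i s a \<in> {0..1}"
  using policy_nonneg[OF joint_policy_mem] policy_le_1[OF joint_policy_mem] by auto

lemma act_prob_nonneg: "\<gamma> \<in> JP \<Longrightarrow> 0 \<le> act_prob \<gamma> s u"
  unfolding act_prob_def using joint_policy_unit_interval by (auto intro: prod_nonneg)

lemma act_prob_sum:
  assumes "\<gamma> \<in> JP"
  shows "(\<Sum>u\<in>JA. act_prob \<gamma> s u) = 1"
proof -
  have "(\<Sum>u\<in>JA. act_prob \<gamma> s u) = (\<Prod>i\<in>UNIV. \<Sum>a\<in>U i. \<gamma> i s a)"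
    unfolding joint_actions_def act_prob_def by (subst prod_sum_PiE) (use finite_actions in auto)
  also have "\<dots> = 1" using policy_sum[OF joint_policy_mem[OF assms]] by simp
  finally show ?thesis .
qed

lemma sum_act_prob_le:
  assumes "\<gamma> \<in> JP" and "\<And>u. u \<in> JA \<Longrightarrow> \<bar>f u\<bar> \<le> B"
  shows "\<bar>\<Sum>u\<in>JA. act_prob \<gamma> s u * f u\<bar> \<le> B"
proof -
  have "\<bar>\<Sum>u\<in>JA. act_prob \<gamma> s u * f u\<bar> \<le> (\<Sum>u\<in>JA. act_prob \<gamma> s u * B)"
    using act_prob_nonneg[OF assms(1)] assms(2)
    by (intro order.trans[OF sum_abs] sum_mono) (simp add: abs_mult mult_left_mono)
  also have "\<dots> = B" using act_prob_sum[OF assms(1)] by (simp add: sum_distrib_right[symmetric])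
  finally show ?thesis .
qed

lemma sum_trans_le:
  assumes "u \<in> JA" and "\<And>y. \<bar>W y\<bar> \<le> B"
  shows "\<bar>\<Sum>y\<in>UNIV. P s u y * W y\<bar> \<le> B"
proof -
  have "\<bar>\<Sum>y\<in>UNIV. P s u y * W y\<bar> \<le> (\<Sum>y\<in>UNIV. P s u y * B)"
    using assms trans_nonneg by (intro order.trans[OF sum_abs] sum_mono) (simp add: abs_mult mult_left_mono)
  also have "\<dots> = B" using trans_sum[OF assms(1)] by (simp add: sum_distrib_right[symmetric])
  finally show ?thesis .
qed

definition cost_bound :: real where
  "cost_bound = (\<Sum>i\<in>UNIV. \<Sum>s\<in>UNIV. \<Sum>u\<in>JA. \<bar>c i s u\<bar>)"

definition lookahead :: "'i \<Rightarrow> ('x \<Rightarrow> real) \<Rightarrow> 'x \<Rightarrow> ('i \<Rightarrow> 'a) \<Rightarrow> real" where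
  "lookahead i W s u = c i s u + beta i * (\<Sum>y\<in>UNIV. P s u y * W y)"

definition bellman :: "'i \<Rightarrow> ('i \<Rightarrow> 'x \<Rightarrow> 'a \<Rightarrow> real) \<Rightarrow> ('x \<Rightarrow> real) \<Rightarrow> 'x \<Rightarrow> real" where
  "bellman i \<gamma> W s = (\<Sum>u\<in>JA. act_prob \<gamma> s u * lookahead i W s u)"

definition step_kernel :: "('i \<Rightarrow> 'x \<Rightarrow> 'a \<Rightarrow> real) \<Rightarrow> 'x \<Rightarrow> 'x \<Rightarrow> real" where
  "step_kernel \<gamma> s y = (\<Sum>u\<in>JA. act_prob \<gamma> s u * P s u y)"

definition mean_cost :: "'i \<Rightarrow> ('i \<Rightarrow> 'x \<Rightarrow> 'a \<Rightarrow> real) \<Rightarrow> 'x \<Rightarrow> real" where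
  "mean_cost i \<gamma> s = (\<Sum>u\<in>JA. act_prob \<gamma> s u * c i s u)"

lemma cost_bound_ge:
  assumes "u \<in> JA"
  shows "\<bar>c i s u\<bar> \<le> cost_bound"
proof -
  have "\<bar>c i s u\<bar> \<le> (\<Sum>u\<in>JA. \<bar>c i s u\<bar>)"
    using assms finite_joint_actions by (intro member_le_sum) auto
  also have "\<dots> \<le> (\<Sum>s\<in>UNIV. \<Sum>u\<in>JA. \<bar>c i s u\<bar>)"
    by (intro member_le_sum) (auto intro: sum_nonneg)
  also have "\<dots> \<le> cost_bound"
    unfolding cost_bound_def by (intro member_le_sum) (auto intro: sum_nonneg)
  finally show ?thesis .
qed

lemma cost_bound_nonneg: "0 \<le> cost_bound"
  unfolding cost_bound_def by (auto intro: sum_nonneg)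

lemma abs_lookahead_le:
  assumes "u \<in> JA" and "\<And>y. \<bar>W y\<bar> \<le> B"
  shows "\<bar>lookahead i W s u\<bar> \<le> cost_bound + beta i * B"
proof -
  have "\<bar>beta i * (\<Sum>y\<in>UNIV. P s u y * W y)\<bar> \<le> beta i * B"
    using sum_trans_le[OF assms] beta_nonneg[of i] by (simp add: abs_mult mult_left_mono)
  then show ?thesis using cost_bound_ge[OF assms(1), of i s] unfolding lookahead_def by linarith
qed

lemma step_kernel_nonneg: "\<gamma> \<in> JP \<Longrightarrow> 0 \<le> step_kernel \<gamma> s y"
  unfolding step_kernel_def by (intro sum_nonneg mult_nonneg_nonneg act_prob_nonneg trans_nonneg)

lemma step_kernel_sum:
  assumes "\<gamma> \<in> JP"
  shows "(\<Sum>y\<in>UNIV. step_kernel \<gamma> s y) = 1"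
proof -
  have "(\<Sum>y\<in>UNIV. step_kernel \<gamma> s y) = (\<Sum>u\<in>JA. act_prob \<gamma> s u * (\<Sum>y\<in>UNIV. P s u y))"
    unfolding step_kernel_def by (subst sum.swap) (simp add: sum_distrib_left)
  also have "\<dots> = (\<Sum>u\<in>JA. act_prob \<gamma> s u)" by (intro sum.cong) (auto simp: trans_sum)
  finally show ?thesis using act_prob_sum[OF assms] by simp
qed

lemma bellman_eq_step_kernel:
  "bellman i \<gamma> W s = mean_cost i \<gamma> s + beta i * (\<Sum>y\<in>UNIV. step_kernel \<gamma> s y * W y)"
proof -
  have "(\<Sum>u\<in>JA. act_prob \<gamma> s u * (beta i * (\<Sum>y\<in>UNIV. P s u y * W y)))
      = (\<Sum>y\<in>UNIV. \<Sum>u\<in>JA. beta i * (act_prob \<gamma> s u * P s u y * W y))"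
    by (subst sum.swap) (simp add: sum_distrib_left mult_ac)
  also have "\<dots> = beta i * (\<Sum>y\<in>UNIV. step_kernel \<gamma> s y * W y)"
    unfolding step_kernel_def by (simp add: sum_distrib_left sum_distrib_right mult_ac)
  finally show ?thesis
    unfolding bellman_def lookahead_def mean_cost_def by (simp add: distrib_left sum.distrib)
qed

lemma state_dist_Suc_right:
  "state_dist U P \<gamma> x (Suc t) y = (\<Sum>s\<in>UNIV. state_dist U P \<gamma> x t s * step_kernel \<gamma> s y)"
  by (simp add: step_kernel_def)

lemma state_dist_Suc_left:
  "state_dist U P \<gamma> x (Suc t) z = (\<Sum>y\<in>UNIV. step_kernel \<gamma> x y * state_dist U P \<gamma> y t z)"
proof (induction t arbitrary: z)
  case 0
  show ?case by (simp add: state_dist_Suc_right step_kernel_def flip: of_bool_def)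
next
  case (Suc t)
  have "state_dist U P \<gamma> x (Suc (Suc t)) z
      = (\<Sum>s\<in>UNIV. state_dist U P \<gamma> x (Suc t) s * step_kernel \<gamma> s z)"
    by (rule state_dist_Suc_right)
  also have "\<dots> = (\<Sum>s\<in>UNIV. \<Sum>y\<in>UNIV. step_kernel \<gamma> x y * (state_dist U P \<gamma> y t s * step_kernel \<gamma> s z))"
    by (simp only: Suc sum_distrib_right mult.assoc)
  also have "\<dots> = (\<Sum>y\<in>UNIV. step_kernel \<gamma> x y * state_dist U P \<gamma> y (Suc t) z)"
    by (subst sum.swap) (simp only: state_dist_Suc_right sum_distrib_left)
  finally show ?case .
qed

lemma state_dist_nonneg: "\<gamma> \<in> JP \<Longrightarrow> 0 \<le> state_dist U P \<gamma> x t y"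
  by (induction t arbitrary: y)
    (auto intro!: sum_nonneg mult_nonneg_nonneg act_prob_nonneg trans_nonneg)

lemma state_dist_sum: "\<gamma> \<in> JP \<Longrightarrow> (\<Sum>y\<in>UNIV. state_dist U P \<gamma> x t y) = 1"
proof (induction t)
  case (Suc t)
  have "(\<Sum>y\<in>UNIV. state_dist U P \<gamma> x (Suc t) y)
      = (\<Sum>s\<in>UNIV. state_dist U P \<gamma> x t s * (\<Sum>y\<in>UNIV. step_kernel \<gamma> s y))"
    unfolding state_dist_Suc_right by (subst sum.swap) (simp add: sum_distrib_left)
  then show ?case using Suc step_kernel_sum by simp
qed simp

lemma exp_stage_cost_eq:
  "exp_stage_cost U P c i x \<gamma> t = (\<Sum>s\<in>UNIV. state_dist U P \<gamma> x t s * mean_cost i \<gamma> s)"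
  by (simp add: exp_stage_cost_def mean_cost_def)

lemma exp_stage_cost_0: "exp_stage_cost U P c i x \<gamma> 0 = mean_cost i \<gamma> x"
  by (simp add: exp_stage_cost_eq flip: of_bool_def)

lemma exp_stage_cost_Suc:
  "exp_stage_cost U P c i x \<gamma> (Suc t) = (\<Sum>y\<in>UNIV. step_kernel \<gamma> x y * exp_stage_cost U P c i y \<gamma> t)"
  unfolding exp_stage_cost_eq state_dist_Suc_left sum_distrib_right
  by (subst sum.swap) (simp add: sum_distrib_left mult.assoc)

lemma abs_exp_stage_cost_le:
  assumes "\<gamma> \<in> JP"
  shows "\<bar>exp_stage_cost U P c i x \<gamma> t\<bar> \<le> cost_bound"
proof -
  have mean: "\<bar>mean_cost i \<gamma> s\<bar> \<le> cost_bound" for s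
    unfolding mean_cost_def using assms cost_bound_ge by (rule sum_act_prob_le)
  have "\<bar>exp_stage_cost U P c i x \<gamma> t\<bar> \<le> (\<Sum>s\<in>UNIV. state_dist U P \<gamma> x t s * cost_bound)"
    unfolding exp_stage_cost_eq using state_dist_nonneg[OF assms] mean
    by (intro order.trans[OF sum_abs] sum_mono) (simp add: abs_mult mult_left_mono)
  also have "\<dots> = cost_bound" using state_dist_sum[OF assms] by (simp add: sum_distrib_right[symmetric])
  finally show ?thesis .
qed

lemma summable_discounted_cost:
  assumes "\<gamma> \<in> JP"
  shows "summable (\<lambda>t. beta i ^ t * exp_stage_cost U P c i x \<gamma> t)"
proof (rule summable_comparison_test')
  show "summable (\<lambda>t. cost_bound * beta i ^ t)"
    using beta_nonneg beta_less_1 by (intro summable_mult summable_geometric) auto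
  show "norm (beta i ^ t * exp_stage_cost U P c i x \<gamma> t) \<le> cost_bound * beta i ^ t" for t
  proof -
    have "\<bar>exp_stage_cost U P c i x \<gamma> t\<bar> * beta i ^ t \<le> cost_bound * beta i ^ t"
      using abs_exp_stage_cost_le[OF assms] beta_nonneg[of i] by (intro mult_right_mono) auto
    then show ?thesis using beta_nonneg[of i] by (simp add: abs_mult mult.commute)
  qed
qed

lemma J_bellman:
  assumes "\<gamma> \<in> JP"
  shows "J i \<gamma> x = bellman i \<gamma> (J i \<gamma>) x"
proof -
  define f where "f y = (\<lambda>t. beta i ^ t * exp_stage_cost U P c i y \<gamma> t)" for y
  have summable: "summable (f y)" for y
    unfolding f_def by (rule summable_discounted_cost[OF assms])
  have "(\<Sum>t. f x (Suc t)) = (\<Sum>t. beta i * (\<Sum>y\<in>UNIV. step_kernel \<gamma> x y * f y t))"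
    unfolding f_def exp_stage_cost_Suc by (simp add: sum_distrib_left mult_ac)
  also have "\<dots> = beta i * (\<Sum>y\<in>UNIV. step_kernel \<gamma> x y * suminf (f y))"
    using summable by (simp add: suminf_mult suminf_sum summable_sum summable_mult)
  finally have "suminf (f x) = f x 0 + beta i * (\<Sum>y\<in>UNIV. step_kernel \<gamma> x y * suminf (f y))"
    using suminf_split_head[OF summable[of x]] by simp
  then show ?thesis
    unfolding bellman_eq_step_kernel cost_J_def by (simp add: f_def exp_stage_cost_0)
qed

definition coords :: "('i \<times> 'x \<times> 'a) set" where
  "coords = (SIGMA i:UNIV. SIGMA s:UNIV. U i)"

lemma mem_coords [simp]: "(i, s, a) \<in> coords \<longleftrightarrow> a \<in> U i"
  by (simp add: coords_def)

lemma finite_coords: "finite coords"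
  unfolding coords_def using finite_actions by (intro finite_SigmaI) auto

lemma coords_nonempty: "coords \<noteq> {}"
  using actions_nonempty[of undefined] by (auto simp: coords_def)

lemma pol_dist_eq_Max:
  fixes \<gamma> \<pi> :: "'i \<Rightarrow> 'x \<Rightarrow> 'a \<Rightarrow> real"
  shows "pol_dist U \<gamma> \<pi> = Max ((\<lambda>(i, s, a). \<bar>\<gamma> i s a - \<pi> i s a\<bar>) ` coords)"
  unfolding pol_dist_def
proof (intro arg_cong[where f = Max] equalityI subsetI)
  fix v assume "v \<in> {\<bar>\<gamma> i s a - \<pi> i s a\<bar> | i s a. a \<in> U i}"
  then obtain i s a where "v = \<bar>\<gamma> i s a - \<pi> i s a\<bar>" "a \<in> U i" by blast
  then show "v \<in> (\<lambda>(i, s, a). \<bar>\<gamma> i s a - \<pi> i s a\<bar>) ` coords"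
    by (intro image_eqI[where x = "(i, s, a)"]) auto
qed (auto simp: coords_def)

lemma abs_le_pol_dist:
  fixes \<gamma> \<pi> :: "'i \<Rightarrow> 'x \<Rightarrow> 'a \<Rightarrow> real"
  assumes "a \<in> U i"
  shows "\<bar>\<gamma> i s a - \<pi> i s a\<bar> \<le> pol_dist U \<gamma> \<pi>"
  unfolding pol_dist_eq_Max using finite_coords assms
  by (intro Max_ge) (auto intro: image_eqI[where x = "(i, s, a)"])

lemma pol_dist_le:
  fixes \<gamma> \<pi> :: "'i \<Rightarrow> 'x \<Rightarrow> 'a \<Rightarrow> real"
  assumes "\<And>i s a. a \<in> U i \<Longrightarrow> \<bar>\<gamma> i s a - \<pi> i s a\<bar> \<le> e"
  shows "pol_dist U \<gamma> \<pi> \<le> e"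
  unfolding pol_dist_eq_Max using assms finite_coords coords_nonempty by (subst Max_le_iff) auto

lemma pol_dist_nonneg:
  fixes \<gamma> \<pi> :: "'i \<Rightarrow> 'x \<Rightarrow> 'a \<Rightarrow> real"
  shows "0 \<le> pol_dist U \<gamma> \<pi>"
  using abs_le_pol_dist[of _ undefined \<gamma> _ \<pi>] actions_nonempty[of undefined]
  by (meson abs_ge_zero all_not_in_conv order.trans)

lemma pol_dist_commute: "pol_dist U \<gamma> \<pi> = pol_dist U \<pi> \<gamma>"
  unfolding pol_dist_def by (simp add: abs_minus_commute)

lemma pol_dist_fun_upd_le:
  fixes \<gamma> \<pi> :: "'i \<Rightarrow> 'x \<Rightarrow> 'a \<Rightarrow> real"
  shows "pol_dist U (\<gamma>(i := \<sigma>)) (\<pi>(i := \<sigma>)) \<le> pol_dist U \<gamma> \<pi>"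
  by (rule pol_dist_le) (auto simp: abs_le_pol_dist pol_dist_nonneg)

lemma bellman_diff_le:
  assumes "\<gamma> \<in> JP" and "\<And>y. V y - W y \<le> D"
  shows "bellman i \<gamma> V s - bellman i \<gamma> W s \<le> beta i * D"
proof -
  have "(\<Sum>y\<in>UNIV. step_kernel \<gamma> s y * (V y - W y)) \<le> (\<Sum>y\<in>UNIV. step_kernel \<gamma> s y * D)"
    using assms step_kernel_nonneg by (intro sum_mono mult_left_mono) auto
  also have "\<dots> = D" using step_kernel_sum[OF assms(1)] by (simp add: sum_distrib_right[symmetric])
  moreover have "bellman i \<gamma> V s - bellman i \<gamma> W s = beta i * (\<Sum>y\<in>UNIV. step_kernel \<gamma> s y * (V y - W y))"
    unfolding bellman_eq_step_kernel by (simp add: algebra_simps sum_subtractf)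
  ultimately show ?thesis using beta_nonneg[of i] by (simp add: mult_left_mono)
qed

lemma abs_bellman_le:
  "\<gamma> \<in> JP \<Longrightarrow> (\<And>y. \<bar>W y\<bar> \<le> B) \<Longrightarrow> \<bar>bellman i \<gamma> W s\<bar> \<le> cost_bound + beta i * B"
  unfolding bellman_def by (intro sum_act_prob_le abs_lookahead_le)

lemma abs_J_le:
  assumes "\<gamma> \<in> JP"
  shows "\<bar>J i \<gamma> s\<bar> \<le> cost_bound / (1 - beta i)"
proof -
  define B where "B = Max (range (\<lambda>y. \<bar>J i \<gamma> y\<bar>))"
  have B_ge: "\<bar>J i \<gamma> y\<bar> \<le> B" for y unfolding B_def by (rule Max_ge) auto
  have "B \<in> range (\<lambda>y. \<bar>J i \<gamma> y\<bar>)" unfolding B_def by (rule Max_in) auto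
  then obtain y where "B = \<bar>J i \<gamma> y\<bar>" by blast
  also have "\<dots> = \<bar>bellman i \<gamma> (J i \<gamma>) y\<bar>" using J_bellman[OF assms, of i y] by (rule arg_cong)
  also have "\<dots> \<le> cost_bound + beta i * B" by (rule abs_bellman_le[OF assms B_ge])
  finally have "B \<le> cost_bound / (1 - beta i)" using beta_less_1 by (rule le_divide_one_minus)
  then show ?thesis using B_ge[of s] by linarith
qed

text \<open>\<open>J i \<gamma>\<close> is the fixed point of the \<open>beta i\<close>-contraction \<open>bellman i \<gamma>\<close>, so a
  subsolution lies below it up to \<open>\<eta> / (1 - beta i)\<close>.\<close>
lemma le_J_of_le_bellman:
  assumes "\<gamma> \<in> JP" and "\<And>s. V s \<le> bellman i \<gamma> V s + \<eta>"
  shows "V s \<le> J i \<gamma> s + \<eta> / (1 - beta i)"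
proof -
  define D where "D = Max (range (\<lambda>y. V y - J i \<gamma> y))"
  have D_ge: "V y - J i \<gamma> y \<le> D" for y unfolding D_def by (rule Max_ge) auto
  have "D \<in> range (\<lambda>y. V y - J i \<gamma> y)" unfolding D_def by (rule Max_in) auto
  then obtain y where "D = V y - J i \<gamma> y" by blast
  also have "\<dots> \<le> \<eta> + (bellman i \<gamma> V y - bellman i \<gamma> (J i \<gamma>) y)"
    using assms(2)[of y] J_bellman[OF assms(1), of i y] by linarith
  also have "\<dots> \<le> \<eta> + beta i * D" using bellman_diff_le[OF assms(1) D_ge] by simp
  finally have "D \<le> \<eta> / (1 - beta i)" using beta_less_1 by (rule le_divide_one_minus)
  then show ?thesis using D_ge[of s] by linarith
qed

lemma abs_act_prob_diff_le:
  assumes "\<gamma> \<in> JP" "\<gamma>' \<in> JP" "u \<in> JA"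
  shows "\<bar>act_prob \<gamma> s u - act_prob \<gamma>' s u\<bar> \<le> CARD('i) * pol_dist U \<gamma> \<gamma>'"
  unfolding act_prob_def
  using abs_prod_diff_le[of UNIV "\<lambda>i. \<gamma> i s (u i)" "\<lambda>i. \<gamma>' i s (u i)" "pol_dist U \<gamma> \<gamma>'"]
    joint_policy_unit_interval[OF assms(1)] joint_policy_unit_interval[OF assms(2)]
    abs_le_pol_dist[OF joint_action_mem[OF assms(3)]]
  by simp

lemma abs_bellman_diff_le:
  assumes "\<gamma> \<in> JP" "\<gamma>' \<in> JP" and "\<And>y. \<bar>W y\<bar> \<le> B"
  shows "\<bar>bellman i \<gamma> W s - bellman i \<gamma>' W s\<bar>
    \<le> card JA * (CARD('i) * pol_dist U \<gamma> \<gamma>' * (cost_bound + beta i * B))"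
proof -
  have "\<bar>bellman i \<gamma> W s - bellman i \<gamma>' W s\<bar>
      \<le> (\<Sum>u\<in>JA. \<bar>act_prob \<gamma> s u - act_prob \<gamma>' s u\<bar> * \<bar>lookahead i W s u\<bar>)"
    unfolding bellman_def by (simp add: sum_subtractf[symmetric] left_diff_distrib[symmetric]
      abs_mult[symmetric] sum_abs)
  also have "\<dots> \<le> (\<Sum>u\<in>JA. CARD('i) * pol_dist U \<gamma> \<gamma>' * (cost_bound + beta i * B))"
    using abs_act_prob_diff_le[OF assms(1,2)] abs_lookahead_le[OF _ assms(3)] pol_dist_nonneg
    by (intro sum_mono mult_mono) auto
  finally show ?thesis by simp
qed

lemma cost_bound_add_discounted: "cost_bound + beta i * (cost_bound / (1 - beta i)) = cost_bound / (1 - beta i)"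
  using beta_less_1[of i] by (simp add: field_simps)

definition lip_J :: "'i \<Rightarrow> real" where
  "lip_J i = card JA * CARD('i) * cost_bound / (1 - beta i)\<^sup>2"

lemma lip_J_nonneg: "0 \<le> lip_J i"
  unfolding lip_J_def using cost_bound_nonneg by simp

lemma J_le_J_add:
  assumes "\<gamma> \<in> JP" "\<gamma>' \<in> JP"
  shows "J i \<gamma> s \<le> J i \<gamma>' s + lip_J i * pol_dist U \<gamma> \<gamma>'"
proof -
  define d where "d = pol_dist U \<gamma> \<gamma>'"
  have gap: "1 - beta i > 0" using beta_less_1[of i] by simp
  have bound: "\<bar>J i \<gamma> y\<bar> \<le> cost_bound / (1 - beta i)" for y by (rule abs_J_le[OF assms(1)])
  have diff: "bellman i \<gamma> (J i \<gamma>) s' - bellman i \<gamma>' (J i \<gamma>) s'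
      \<le> card JA * (CARD('i) * d * (cost_bound / (1 - beta i)))" for s'
    using abs_le_D1[OF abs_bellman_diff_le[OF assms bound, where i = i and s = s']]
    unfolding d_def cost_bound_add_discounted by simp
  have "J i \<gamma> s' \<le> bellman i \<gamma>' (J i \<gamma>) s' + card JA * (CARD('i) * d * (cost_bound / (1 - beta i)))"
    for s'
    using diff[of s'] J_bellman[OF assms(1), of i s'] by linarith
  from le_J_of_le_bellman[OF assms(2) this]
  have "J i \<gamma> s \<le> J i \<gamma>' s + card JA * (CARD('i) * d * (cost_bound / (1 - beta i))) / (1 - beta i)" .
  also have "card JA * (CARD('i) * d * (cost_bound / (1 - beta i))) / (1 - beta i) = lip_J i * d"
    unfolding lip_J_def using gap by (simp add: power2_eq_square field_simps)
  finally show ?thesis unfolding d_def .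
qed

lemma abs_J_diff_le:
  assumes "\<gamma> \<in> JP" "\<gamma>' \<in> JP"
  shows "\<bar>J i \<gamma> s - J i \<gamma>' s\<bar> \<le> lip_J i * pol_dist U \<gamma> \<gamma>'"
  using J_le_J_add[OF assms, of i s] J_le_J_add[OF assms(2,1), of i s]
  unfolding pol_dist_commute[of \<gamma>' \<gamma>] abs_le_iff by linarith

section \<open>Smoothed best responses\<close>

definition Q :: "'i \<Rightarrow> ('i \<Rightarrow> 'x \<Rightarrow> 'a \<Rightarrow> real) \<Rightarrow> ('x \<Rightarrow> real) \<Rightarrow> 'x \<Rightarrow> 'a \<Rightarrow> real" where
  "Q i \<gamma> W s a = (\<Sum>u\<in>{u\<in>JA. u i = a}. (\<Prod>j\<in>UNIV - {i}. \<gamma> j s (u j)) * lookahead i W s u)"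

lemma bellman_fun_upd: "bellman i (\<gamma>(i := \<pi>)) W s = (\<Sum>a\<in>U i. \<pi> s a * Q i \<gamma> W s a)"
proof -
  have "act_prob (\<gamma>(i := \<pi>)) s u = \<pi> s (u i) * (\<Prod>j\<in>UNIV - {i}. \<gamma> j s (u j))" for u
    unfolding act_prob_def by (subst prod.remove[of UNIV i]) (auto intro!: prod.cong)
  then have "bellman i (\<gamma>(i := \<pi>)) W s
      = (\<Sum>u\<in>JA. \<pi> s (u i) * (\<Prod>j\<in>UNIV - {i}. \<gamma> j s (u j)) * lookahead i W s u)"
    unfolding bellman_def by simp
  also have "\<dots> = (\<Sum>a\<in>U i. \<Sum>u\<in>{u\<in>JA. u i = a}. \<pi> s (u i) * (\<Prod>j\<in>UNIV - {i}. \<gamma> j s (u j)) * lookahead i W s u)"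
    by (rule sum.group[symmetric]) (use finite_joint_actions finite_actions joint_action_mem in auto)
  also have "\<dots> = (\<Sum>a\<in>U i. \<pi> s a * Q i \<gamma> W s a)"
    unfolding Q_def by (intro sum.cong refl) (auto simp: sum_distrib_left mult.assoc intro!: sum.cong)
  finally show ?thesis .
qed

lemma bellman_eq_Q: "bellman i \<gamma> W s = (\<Sum>a\<in>U i. \<gamma> i s a * Q i \<gamma> W s a)"
  using bellman_fun_upd[of i \<gamma> "\<gamma> i" W s] by simp

lemma abs_Q_diff_le:
  assumes "\<gamma> \<in> JP" "\<gamma>' \<in> JP" and "\<And>y. \<bar>W y\<bar> \<le> B" and "\<And>y. \<bar>W y - W' y\<bar> \<le> e"
  shows "\<bar>Q i \<gamma> W s a - Q i \<gamma>' W' s a\<bar>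
    \<le> card JA * (CARD('i) * pol_dist U \<gamma> \<gamma>' * (cost_bound + beta i * B) + beta i * e)"
proof -
  define pr where "pr g u = (\<Prod>j\<in>UNIV - {i}. g j s (u j))" for g :: "'i \<Rightarrow> 'x \<Rightarrow> 'a \<Rightarrow> real" and u
  define h where "h W u = lookahead i W s u" for W u
  define D where "D = CARD('i) * pol_dist U \<gamma> \<gamma>' * (cost_bound + beta i * B) + beta i * e"
  have term_le: "\<bar>pr \<gamma> u * h W u - pr \<gamma>' u * h W' u\<bar> \<le> D" if u: "u \<in> JA" for u
  proof -
    have "\<bar>pr \<gamma> u - pr \<gamma>' u\<bar> \<le> real (card (UNIV - {i})) * pol_dist U \<gamma> \<gamma>'"
      unfolding pr_def using assms(1,2) joint_policy_unit_interval abs_le_pol_dist[OF joint_action_mem[OF u]]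
      by (intro abs_prod_diff_le) auto
    also have "\<dots> \<le> CARD('i) * pol_dist U \<gamma> \<gamma>'"
      using pol_dist_nonneg by (intro mult_right_mono) (auto simp: card_mono)
    finally have pr_diff: "\<bar>pr \<gamma> u - pr \<gamma>' u\<bar> \<le> CARD('i) * pol_dist U \<gamma> \<gamma>'" .
    have pr_bounds: "0 \<le> pr \<gamma>' u" "pr \<gamma>' u \<le> 1"
      unfolding pr_def using assms(2) joint_policy_unit_interval by (auto intro: prod_nonneg prod_le_1)
    have "h W u - h W' u = beta i * (\<Sum>y\<in>UNIV. P s u y * (W y - W' y))"
      unfolding h_def lookahead_def by (simp add: algebra_simps sum_subtractf)
    then have "\<bar>h W u - h W' u\<bar> = beta i * \<bar>\<Sum>y\<in>UNIV. P s u y * (W y - W' y)\<bar>"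
      using beta_nonneg[of i] by (simp add: abs_mult)
    also have "\<dots> \<le> beta i * e" using sum_trans_le[OF u assms(4)] beta_nonneg[of i] by (rule mult_left_mono)
    finally have h_diff: "\<bar>h W u - h W' u\<bar> \<le> beta i * e" .
    have "pr \<gamma> u * h W u - pr \<gamma>' u * h W' u = (pr \<gamma> u - pr \<gamma>' u) * h W u + pr \<gamma>' u * (h W u - h W' u)"
      by (simp add: algebra_simps)
    also have "\<bar>\<dots>\<bar> \<le> \<bar>pr \<gamma> u - pr \<gamma>' u\<bar> * \<bar>h W u\<bar> + pr \<gamma>' u * \<bar>h W u - h W' u\<bar>"
      using pr_bounds abs_triangle_ineq[of "(pr \<gamma> u - pr \<gamma>' u) * h W u" "pr \<gamma>' u * (h W u - h W' u)"]
      by (simp add: abs_mult)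
    also have "\<dots> \<le> CARD('i) * pol_dist U \<gamma> \<gamma>' * (cost_bound + beta i * B) + 1 * (beta i * e)"
      using pr_diff abs_lookahead_le[OF u assms(3)] h_diff pr_bounds unfolding h_def
      by (intro add_mono mult_mono) auto
    finally show ?thesis unfolding D_def by simp
  qed
  have "\<bar>Q i \<gamma> W s a - Q i \<gamma>' W' s a\<bar> \<le> (\<Sum>u\<in>{u\<in>JA. u i = a}. \<bar>pr \<gamma> u * h W u - pr \<gamma>' u * h W' u\<bar>)"
    unfolding Q_def pr_def h_def by (simp add: sum_subtractf[symmetric] sum_abs)
  also have "\<dots> \<le> (\<Sum>u\<in>{u\<in>JA. u i = a}. D)" using term_le by (intro sum_mono) auto
  also have "\<dots> \<le> card JA * D"
  proof -
    have "0 \<le> B" "0 \<le> e"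
      using abs_ge_zero[of "W undefined"] abs_ge_zero[of "W undefined - W' undefined"] assms(3,4) by fastforce+
    then have "0 \<le> D"
      unfolding D_def using pol_dist_nonneg cost_bound_nonneg beta_nonneg
      by (intro add_nonneg_nonneg mult_nonneg_nonneg) auto
    then show ?thesis using finite_joint_actions by (auto intro!: mult_right_mono card_mono)
  qed
  finally show ?thesis unfolding D_def .
qed

lemma abs_Q_le:
  assumes "\<gamma> \<in> JP" and "\<And>y. \<bar>W y\<bar> \<le> B"
  shows "\<bar>Q i \<gamma> W s a\<bar> \<le> card JA * (cost_bound + beta i * B)"
proof -
  have term_le: "\<bar>(\<Prod>j\<in>UNIV - {i}. \<gamma> j s (u j)) * lookahead i W s u\<bar> \<le> cost_bound + beta i * B"
    if "u \<in> JA" for u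
  proof -
    have "0 \<le> (\<Prod>j\<in>UNIV - {i}. \<gamma> j s (u j))" "(\<Prod>j\<in>UNIV - {i}. \<gamma> j s (u j)) \<le> 1"
      using joint_policy_unit_interval[OF assms(1)] by (auto intro!: prod_nonneg prod_le_1)
    then have "\<bar>\<Prod>j\<in>UNIV - {i}. \<gamma> j s (u j)\<bar> * \<bar>lookahead i W s u\<bar> \<le> \<bar>lookahead i W s u\<bar>"
      by (intro mult_left_le_one_le) auto
    then show ?thesis using abs_lookahead_le[where W = W and B = B, OF that assms(2), of i s]
      unfolding abs_mult by linarith
  qed
  have "\<bar>Q i \<gamma> W s a\<bar> \<le> (\<Sum>u\<in>{u\<in>JA. u i = a}. cost_bound + beta i * B)"
    unfolding Q_def using term_le by (intro order.trans[OF sum_abs] sum_mono) auto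
  also have "\<dots> \<le> card JA * (cost_bound + beta i * B)"
  proof -
    have "0 \<le> cost_bound + beta i * B"
      using abs_ge_zero[of "W undefined"] assms(2)[of undefined] cost_bound_nonneg beta_nonneg[of i] by simp
    then show ?thesis using finite_joint_actions by (auto intro!: mult_right_mono card_mono)
  qed
  finally show ?thesis .
qed

abbreviation QJ :: "'i \<Rightarrow> ('i \<Rightarrow> 'x \<Rightarrow> 'a \<Rightarrow> real) \<Rightarrow> 'x \<Rightarrow> 'a \<Rightarrow> real" where
  "QJ i \<gamma> s a \<equiv> Q i \<gamma> (J i \<gamma>) s a"

definition bound_Q :: "'i \<Rightarrow> real" where
  "bound_Q i = card JA * cost_bound / (1 - beta i)"

definition lip_Q :: "'i \<Rightarrow> real" where
  "lip_Q i = card JA * (CARD('i) * cost_bound / (1 - beta i) + beta i * lip_J i)"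

lemma abs_QJ_le:
  assumes "\<gamma> \<in> JP"
  shows "\<bar>QJ i \<gamma> s a\<bar> \<le> bound_Q i"
  using abs_Q_le[where W = "J i \<gamma>" and B = "cost_bound / (1 - beta i)", OF assms abs_J_le[OF assms],
      of i s a]
  unfolding bound_Q_def cost_bound_add_discounted
  by simp

lemma bound_Q_nonneg: "0 \<le> bound_Q i"
  unfolding bound_Q_def using cost_bound_nonneg beta_less_1[of i] by simp

lemma abs_QJ_diff_le:
  assumes "\<gamma> \<in> JP" "\<gamma>' \<in> JP"
  shows "\<bar>QJ i \<gamma> s a - QJ i \<gamma>' s a\<bar> \<le> lip_Q i * pol_dist U \<gamma> \<gamma>'"
  using abs_Q_diff_le[where W = "J i \<gamma>" and W' = "J i \<gamma>'" and B = "cost_bound / (1 - beta i)"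
      and e = "lip_J i * pol_dist U \<gamma> \<gamma>'", OF assms abs_J_le[OF assms(1)] abs_J_diff_le[OF assms],
      of i s a]
  unfolding cost_bound_add_discounted lip_Q_def by (simp add: algebra_simps)

lemma lip_Q_nonneg: "0 \<le> lip_Q i"
  unfolding lip_Q_def using cost_bound_nonneg beta_nonneg[of i] beta_less_1[of i] lip_J_nonneg[of i]
  by (intro mult_nonneg_nonneg add_nonneg_nonneg divide_nonneg_nonneg) auto

definition min_QJ :: "'i \<Rightarrow> ('i \<Rightarrow> 'x \<Rightarrow> 'a \<Rightarrow> real) \<Rightarrow> 'x \<Rightarrow> real" where
  "min_QJ i \<gamma> s = Min (QJ i \<gamma> s ` U i)"

definition br_weight :: "real \<Rightarrow> 'i \<Rightarrow> ('i \<Rightarrow> 'x \<Rightarrow> 'a \<Rightarrow> real) \<Rightarrow> 'x \<Rightarrow> 'a \<Rightarrow> real" where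
  "br_weight \<theta> i \<gamma> s a = max 0 (min_QJ i \<gamma> s + \<theta> - QJ i \<gamma> s a)"

definition smoothed_br ::
  "('i \<Rightarrow> real) \<Rightarrow> ('i \<Rightarrow> 'x \<Rightarrow> 'a \<Rightarrow> real) \<Rightarrow> 'i \<Rightarrow> 'x \<Rightarrow> 'a \<Rightarrow> real" where
  "smoothed_br \<theta> \<gamma> i s a =
     (if a \<in> U i then br_weight (\<theta> i) i \<gamma> s a / (\<Sum>b\<in>U i. br_weight (\<theta> i) i \<gamma> s b) else 0)"

lemma min_QJ_le: "a \<in> U i \<Longrightarrow> min_QJ i \<gamma> s \<le> QJ i \<gamma> s a"
  unfolding min_QJ_def using finite_actions by (intro Min_le) auto

lemma br_weight_nonneg: "0 \<le> br_weight \<theta> i \<gamma> s a"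
  by (simp add: br_weight_def)

lemma br_weight_le_sum: "a \<in> U i \<Longrightarrow> br_weight \<theta> i \<gamma> s a \<le> (\<Sum>b\<in>U i. br_weight \<theta> i \<gamma> s b)"
  using finite_actions br_weight_nonneg by (intro member_le_sum) auto

lemma sum_br_weight_ge:
  assumes "\<theta> > 0"
  shows "\<theta> \<le> (\<Sum>b\<in>U i. br_weight \<theta> i \<gamma> s b)"
proof -
  have "min_QJ i \<gamma> s \<in> QJ i \<gamma> s ` U i"
    unfolding min_QJ_def using finite_actions actions_nonempty by (intro Min_in) auto
  then obtain a where "a \<in> U i" "QJ i \<gamma> s a = min_QJ i \<gamma> s" by auto
  then have "br_weight \<theta> i \<gamma> s a = \<theta>" using assms by (simp add: br_weight_def)
  then show ?thesis using br_weight_le_sum[OF \<open>a \<in> U i\<close>, where \<theta> = \<theta> and \<gamma> = \<gamma> and s = s] by simp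
qed

lemma smoothed_br_joint_policy:
  assumes "\<And>i. \<theta> i > 0"
  shows "smoothed_br \<theta> \<gamma> \<in> JP"
  unfolding joint_policies_def policies_def
proof (intro CollectI allI conjI impI)
  fix i s
  have "(\<Sum>b\<in>U i. br_weight (\<theta> i) i \<gamma> s b) > 0"
    using sum_br_weight_ge[OF assms, of i] assms[of i] by (meson less_le_trans)
  then show "(\<Sum>a\<in>U i. smoothed_br \<theta> \<gamma> i s a) = 1"
    unfolding smoothed_br_def by (simp add: sum_divide_distrib[symmetric])
qed (auto simp: smoothed_br_def intro!: divide_nonneg_nonneg sum_nonneg br_weight_nonneg)

lemma smoothed_br_mean_QJ_le:
  assumes "\<And>i. \<theta> i > 0"
  shows "(\<Sum>a\<in>U i. smoothed_br \<theta> \<gamma> i s a * QJ i \<gamma> s a) \<le> min_QJ i \<gamma> s + \<theta> i"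
proof -
  have "smoothed_br \<theta> \<gamma> i s a * QJ i \<gamma> s a \<le> smoothed_br \<theta> \<gamma> i s a * (min_QJ i \<gamma> s + \<theta> i)" for a
  proof (cases "br_weight (\<theta> i) i \<gamma> s a = 0")
    case False
    then have "QJ i \<gamma> s a \<le> min_QJ i \<gamma> s + \<theta> i" by (auto simp: br_weight_def max_def split: if_splits)
    then show ?thesis
      using policy_nonneg[OF joint_policy_mem[OF smoothed_br_joint_policy[OF assms]]]
      by (intro mult_left_mono) auto
  qed (simp add: smoothed_br_def)
  then have "(\<Sum>a\<in>U i. smoothed_br \<theta> \<gamma> i s a * QJ i \<gamma> s a)
      \<le> (\<Sum>a\<in>U i. smoothed_br \<theta> \<gamma> i s a) * (min_QJ i \<gamma> s + \<theta> i)"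
    by (simp add: sum_distrib_right sum_mono)
  then show ?thesis
    using policy_sum[OF joint_policy_mem[OF smoothed_br_joint_policy[OF assms]]] by simp
qed

definition lip_br :: "('i \<Rightarrow> real) \<Rightarrow> 'i \<Rightarrow> real" where
  "lip_br \<theta> i = 2 * lip_Q i * (1 + card (U i)) / \<theta> i"

lemma abs_smoothed_br_diff_le:
  assumes \<theta>: "\<And>i. \<theta> i > 0" and "\<gamma> \<in> JP" "\<gamma>' \<in> JP"
  shows "\<bar>smoothed_br \<theta> \<gamma> i s a - smoothed_br \<theta> \<gamma>' i s a\<bar> \<le> lip_br \<theta> i * pol_dist U \<gamma> \<gamma>'"
proof (cases "a \<in> U i")
  case False
  then show ?thesis
    using lip_Q_nonneg[of i] \<theta>[of i] pol_dist_nonneg[of \<gamma> \<gamma>']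
    by (simp add: smoothed_br_def lip_br_def)
next
  case a: True
  define d where "d = pol_dist U \<gamma> \<gamma>'"
  define w where "w g b = br_weight (\<theta> i) i g s b" for g b
  have min_diff: "\<bar>min_QJ i \<gamma> s - min_QJ i \<gamma>' s\<bar> \<le> lip_Q i * d"
    unfolding min_QJ_def d_def using finite_actions actions_nonempty abs_QJ_diff_le[OF assms(2,3)]
    by (intro abs_Min_image_diff_le) auto
  have w_diff: "\<bar>w \<gamma> b - w \<gamma>' b\<bar> \<le> 2 * lip_Q i * d" for b
    using min_diff abs_QJ_diff_le[OF assms(2,3), of i s b] lip_Q_nonneg[of i] pol_dist_nonneg[of \<gamma> \<gamma>']
    unfolding w_def br_weight_def d_def by (simp add: max_def abs_le_iff split: if_splits)
  have sum_diff: "\<bar>(\<Sum>b\<in>U i. w \<gamma> b) - (\<Sum>b\<in>U i. w \<gamma>' b)\<bar> \<le> card (U i) * (2 * lip_Q i * d)"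
    using w_diff by (intro order.trans[OF _ sum_bounded_above[of "U i"]])
      (auto simp: sum_subtractf[symmetric] intro: order.trans[OF sum_abs])
  have "\<bar>smoothed_br \<theta> \<gamma> i s a - smoothed_br \<theta> \<gamma>' i s a\<bar>
      \<le> (\<bar>w \<gamma> a - w \<gamma>' a\<bar> + \<bar>(\<Sum>b\<in>U i. w \<gamma> b) - (\<Sum>b\<in>U i. w \<gamma>' b)\<bar>) / \<theta> i"
    unfolding smoothed_br_def w_def using a \<theta>
    by (simp, intro abs_divide_diff_le br_weight_nonneg br_weight_le_sum sum_br_weight_ge)
  also have "\<dots> \<le> (2 * lip_Q i * d + card (U i) * (2 * lip_Q i * d)) / \<theta> i"
    using w_diff[of a] sum_diff \<theta>[of i] by (intro divide_right_mono add_mono) auto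
  also have "\<dots> = lip_br \<theta> i * d" unfolding lip_br_def by (simp add: field_simps)
  finally show ?thesis unfolding d_def .
qed

lemma J_le_deviation_add:
  assumes \<theta>: "\<And>i. \<theta> i > 0" and \<gamma>: "\<gamma> \<in> JP" and \<pi>: "\<pi> \<in> policies U i"
  shows "J i \<gamma> s \<le> J i (\<gamma>(i := \<pi>)) s
    + (\<theta> i + card (U i) * pol_dist U \<gamma> (smoothed_br \<theta> \<gamma>) * bound_Q i) / (1 - beta i)"
proof (rule le_J_of_le_bellman[OF joint_policy_fun_upd[OF \<gamma> \<pi>]])
  fix s
  define F where "F = smoothed_br \<theta> \<gamma>"
  define \<delta> where "\<delta> = pol_dist U \<gamma> F"
  have "J i \<gamma> s = (\<Sum>a\<in>U i. \<gamma> i s a * QJ i \<gamma> s a)"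
    using J_bellman[OF \<gamma>, of i s] unfolding bellman_eq_Q .
  also have "\<dots> = (\<Sum>a\<in>U i. F i s a * QJ i \<gamma> s a) + (\<Sum>a\<in>U i. (\<gamma> i s a - F i s a) * QJ i \<gamma> s a)"
    unfolding left_diff_distrib sum_subtractf by simp
  finally have J_eq: "J i \<gamma> s = (\<Sum>a\<in>U i. F i s a * QJ i \<gamma> s a) + (\<Sum>a\<in>U i. (\<gamma> i s a - F i s a) * QJ i \<gamma> s a)" .
  have "(\<Sum>a\<in>U i. (\<gamma> i s a - F i s a) * QJ i \<gamma> s a) \<le> (\<Sum>a\<in>U i. \<delta> * bound_Q i)"
  proof (rule sum_mono)
    fix a assume "a \<in> U i"
    then have "\<bar>(\<gamma> i s a - F i s a) * QJ i \<gamma> s a\<bar> \<le> \<delta> * bound_Q i"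
      unfolding abs_mult \<delta>_def using abs_le_pol_dist abs_QJ_le[OF \<gamma>] pol_dist_nonneg
      by (intro mult_mono) auto
    then show "(\<gamma> i s a - F i s a) * QJ i \<gamma> s a \<le> \<delta> * bound_Q i" by linarith
  qed
  then have perturbation: "(\<Sum>a\<in>U i. (\<gamma> i s a - F i s a) * QJ i \<gamma> s a) \<le> card (U i) * \<delta> * bound_Q i"
    by simp
  have smoothed: "(\<Sum>a\<in>U i. F i s a * QJ i \<gamma> s a) \<le> min_QJ i \<gamma> s + \<theta> i"
    unfolding F_def by (rule smoothed_br_mean_QJ_le[OF \<theta>])
  have "min_QJ i \<gamma> s = (\<Sum>a\<in>U i. \<pi> s a * min_QJ i \<gamma> s)"
    using policy_sum[OF \<pi>, of s] by (simp add: sum_distrib_right[symmetric])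
  also have "\<dots> \<le> bellman i (\<gamma>(i := \<pi>)) (J i \<gamma>) s"
    unfolding bellman_fun_upd using min_QJ_le policy_nonneg[OF \<pi>] by (intro sum_mono mult_left_mono) auto
  finally have "min_QJ i \<gamma> s \<le> bellman i (\<gamma>(i := \<pi>)) (J i \<gamma>) s" .
  with J_eq perturbation smoothed
  show "J i \<gamma> s \<le> bellman i (\<gamma>(i := \<pi>)) (J i \<gamma>) s
      + (\<theta> i + card (U i) * pol_dist U \<gamma> (smoothed_br \<theta> \<gamma>) * bound_Q i)"
    unfolding \<delta>_def F_def by linarith
qed

lemma pol_dist_smoothed_br_le:
  assumes "\<And>i. \<theta> i > 0" and "\<gamma> \<in> JP" "\<gamma>' \<in> JP"
  shows "pol_dist U (smoothed_br \<theta> \<gamma>) (smoothed_br \<theta> \<gamma>') \<le> (\<Sum>i\<in>UNIV. lip_br \<theta> i) * pol_dist U \<gamma> \<gamma>'"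
proof (rule pol_dist_le)
  fix i s a
  have "lip_br \<theta> i \<le> (\<Sum>i\<in>UNIV. lip_br \<theta> i)"
    using assms(1) lip_Q_nonneg by (intro member_le_sum) (auto simp: lip_br_def less_imp_le)
  then have "lip_br \<theta> i * pol_dist U \<gamma> \<gamma>' \<le> (\<Sum>i\<in>UNIV. lip_br \<theta> i) * pol_dist U \<gamma> \<gamma>'"
    using pol_dist_nonneg by (rule mult_right_mono)
  with abs_smoothed_br_diff_le[OF assms]
  show "\<bar>smoothed_br \<theta> \<gamma> i s a - smoothed_br \<theta> \<gamma>' i s a\<bar> \<le> (\<Sum>i\<in>UNIV. lip_br \<theta> i) * pol_dist U \<gamma> \<gamma>'"
    by (rule order.trans)
qed

section \<open>Existence of approximate equilibria\<close>

definition flatten :: "('i \<Rightarrow> 'x \<Rightarrow> 'a \<Rightarrow> real) \<Rightarrow> 'i \<times> 'x \<times> 'a \<Rightarrow> real" where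
  "flatten \<gamma> = (\<lambda>(i, s, a). \<gamma> i s a)"

definition mass :: "('i \<times> 'x \<times> 'a \<Rightarrow> real) \<Rightarrow> 'i \<Rightarrow> 'x \<Rightarrow> real" where
  "mass z i s = (\<Sum>b\<in>U i. z (i, s, b))"

definition default_action :: "'i \<Rightarrow> 'a" where
  "default_action i = (SOME a. a \<in> U i)"

text \<open>A Lipschitz retraction of the unit cube on \<open>coords\<close> onto the joint policies: the weights
  at \<open>(i, s)\<close> are scaled down if their sum exceeds \<open>1\<close>, and the missing mass goes to a fixed action.\<close>
definition retract :: "('i \<times> 'x \<times> 'a \<Rightarrow> real) \<Rightarrow> 'i \<Rightarrow> 'x \<Rightarrow> 'a \<Rightarrow> real" where
  "retract z i s a =
     (if a \<in> U i then z (i, s, a) / max (mass z i s) 1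
        + (if a = default_action i then 1 - mass z i s / max (mass z i s) 1 else 0)
      else 0)"

definition lip_retract :: real where
  "lip_retract = 1 + 3 * (\<Sum>i\<in>UNIV. real (card (U i)))"

lemma default_action_mem: "default_action i \<in> U i"
  unfolding default_action_def using actions_nonempty by (simp add: some_in_eq)

lemma flatten_unit_cube: "\<gamma> \<in> JP \<Longrightarrow> \<forall>t\<in>coords. flatten \<gamma> t \<in> {0..1}"
  unfolding flatten_def using joint_policy_unit_interval by auto

lemma abs_flatten_diff_le: "t \<in> coords \<Longrightarrow> \<bar>flatten \<gamma> t - flatten \<gamma>' t\<bar> \<le> pol_dist U \<gamma> \<gamma>'"
  unfolding flatten_def by (auto simp: coords_def abs_le_pol_dist)

lemma retract_flatten:
  assumes "\<gamma> \<in> JP"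
  shows "retract (flatten \<gamma>) = \<gamma>"
proof (intro ext)
  fix i s a
  have "mass (flatten \<gamma>) i s = 1"
    unfolding mass_def flatten_def using policy_sum[OF joint_policy_mem[OF assms]] by simp
  then show "retract (flatten \<gamma>) i s a = \<gamma> i s a"
    unfolding retract_def using policy_outside[OF joint_policy_mem[OF assms]] by (simp add: flatten_def)
qed

lemma retract_joint_policy:
  assumes "\<forall>t\<in>coords. z t \<in> {0..1}"
  shows "retract z \<in> JP"
  unfolding joint_policies_def policies_def
proof (intro CollectI allI conjI impI)
  fix i s a
  have "0 \<le> mass z i s" unfolding mass_def using assms by (auto intro: sum_nonneg)
  then have "mass z i s / max (mass z i s) 1 \<le> 1" by (simp add: divide_le_eq_1 less_max_iff_disj)
  then show "0 \<le> retract z i s a" unfolding retract_def using assms by auto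
next
  fix i s
  have "(\<Sum>a\<in>U i. retract z i s a)
      = mass z i s / max (mass z i s) 1 + (1 - mass z i s / max (mass z i s) 1)"
    unfolding retract_def mass_def
    using default_action_mem finite_actions by (simp add: sum.distrib sum_divide_distrib)
  then show "(\<Sum>a\<in>U i. retract z i s a) = 1" by simp
qed (simp add: retract_def)

lemma pol_dist_retract_le:
  assumes z: "\<forall>t\<in>coords. z t \<in> {0..1}" and z': "\<forall>t\<in>coords. z' t \<in> {0..1}"
    and d: "\<forall>t\<in>coords. \<bar>z t - z' t\<bar> \<le> d"
  shows "pol_dist U (retract z) (retract z') \<le> lip_retract * d"
proof (rule pol_dist_le)
  fix i s a assume a: "a \<in> U i"
  define m where "m z = max (mass z i s) 1" for z
  have d0: "0 \<le> d" using d a by (meson abs_ge_zero mem_coords order.trans)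
  have mass_diff: "\<bar>mass z i s - mass z' i s\<bar> \<le> card (U i) * d"
    unfolding mass_def using d
    by (intro order.trans[OF _ sum_bounded_above[of "U i"]])
      (auto simp: sum_subtractf[symmetric] intro: order.trans[OF sum_abs])
  then have m_diff: "\<bar>m z - m z'\<bar> \<le> card (U i) * d" unfolding m_def by linarith
  have mass_nonneg: "0 \<le> mass y i s" if "\<forall>t\<in>coords. y t \<in> {0..1}" for y
    unfolding mass_def using that by (auto intro: sum_nonneg)
  have weight_le_mass: "y (i, s, a) \<le> mass y i s" if "\<forall>t\<in>coords. y t \<in> {0..1}" for y
    unfolding mass_def using that a finite_actions by (intro member_le_sum) auto
  have "\<bar>z (i, s, a) / m z - z' (i, s, a) / m z'\<bar> \<le> (\<bar>z (i, s, a) - z' (i, s, a)\<bar> + \<bar>m z - m z'\<bar>) / 1"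
    using z' a weight_le_mass[OF z'] unfolding m_def by (intro abs_divide_diff_le) auto
  also have "\<dots> \<le> d + card (U i) * d" using d a m_diff by (simp add: add_mono)
  finally have weight_diff: "\<bar>z (i, s, a) / m z - z' (i, s, a) / m z'\<bar> \<le> d + card (U i) * d" .
  have "\<bar>mass z i s / m z - mass z' i s / m z'\<bar> \<le> (\<bar>mass z i s - mass z' i s\<bar> + \<bar>m z - m z'\<bar>) / 1"
    using mass_nonneg[OF z'] unfolding m_def by (intro abs_divide_diff_le) auto
  also have "\<dots> \<le> 2 * (card (U i) * d)" using mass_diff m_diff by simp
  finally have rest_diff: "\<bar>mass z i s / m z - mass z' i s / m z'\<bar> \<le> 2 * (card (U i) * d)" .
  have "retract z i s a - retract z' i s a = (z (i, s, a) / m z - z' (i, s, a) / m z')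
      - (if a = default_action i then mass z i s / m z - mass z' i s / m z' else 0)"
    unfolding retract_def m_def using a by (simp add: algebra_simps)
  then have "\<bar>retract z i s a - retract z' i s a\<bar>
      \<le> \<bar>z (i, s, a) / m z - z' (i, s, a) / m z'\<bar> + \<bar>mass z i s / m z - mass z' i s / m z'\<bar>"
    by (cases "a = default_action i") (simp_all add: abs_triangle_ineq4)
  also have "\<dots> \<le> (1 + 3 * card (U i)) * d" using weight_diff rest_diff by (simp add: algebra_simps)
  also have "\<dots> \<le> lip_retract * d"
    unfolding lip_retract_def using d0 by (intro mult_right_mono) (auto intro: member_le_sum)
  finally show "\<bar>retract z i s a - retract z' i s a\<bar> \<le> lip_retract * d" .
qed

lemma exists_near_fixpoint_smoothed_br:
  assumes \<theta>: "\<And>i. \<theta> i > 0" and "\<delta> > 0"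
  shows "\<exists>\<gamma>\<in>JP. pol_dist U \<gamma> (smoothed_br \<theta> \<gamma>) \<le> \<delta>"
proof -
  define L where "L = (\<Sum>i\<in>UNIV. lip_br \<theta> i)"
  define G where "G z = flatten (smoothed_br \<theta> (retract z))" for z
  have "0 \<le> L"
    unfolding L_def lip_br_def using \<theta> lip_Q_nonneg by (auto intro!: sum_nonneg simp: less_imp_le)
  have "1 \<le> lip_retract" unfolding lip_retract_def by (simp add: sum_nonneg)
  have "\<exists>z. (\<forall>t\<in>coords. z t \<in> {0..1}) \<and> (\<forall>t\<in>coords. \<bar>G z t - z t\<bar> \<le> \<delta> / lip_retract)"
  proof (rule approx_fixpoint_unit_cube[OF finite_coords])
    show "\<forall>t\<in>coords. G z t \<in> {0..1}" for z
      unfolding G_def by (intro flatten_unit_cube smoothed_br_joint_policy \<theta>)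
    show "\<forall>t\<in>coords. \<bar>G z t - G z' t\<bar> \<le> (L * lip_retract) * d"
      if z: "\<forall>t\<in>coords. z t \<in> {0..1}" and z': "\<forall>t\<in>coords. z' t \<in> {0..1}"
        and d: "\<forall>t\<in>coords. \<bar>z t - z' t\<bar> \<le> d" for z z' d
    proof
      fix t assume "t \<in> coords"
      then have "\<bar>G z t - G z' t\<bar> \<le> pol_dist U (smoothed_br \<theta> (retract z)) (smoothed_br \<theta> (retract z'))"
        unfolding G_def by (rule abs_flatten_diff_le)
      also have "\<dots> \<le> L * pol_dist U (retract z) (retract z')"
        unfolding L_def using \<theta> retract_joint_policy[OF z] retract_joint_policy[OF z']
        by (rule pol_dist_smoothed_br_le)
      also have "\<dots> \<le> L * (lip_retract * d)"
        using pol_dist_retract_le[OF z z' d] \<open>0 \<le> L\<close> by (rule mult_left_mono)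
      finally show "\<bar>G z t - G z' t\<bar> \<le> (L * lip_retract) * d" by (simp add: mult.assoc)
    qed
    show "0 \<le> L * lip_retract" using \<open>0 \<le> L\<close> \<open>1 \<le> lip_retract\<close> by simp
    show "0 < \<delta> / lip_retract" using \<open>\<delta> > 0\<close> \<open>1 \<le> lip_retract\<close> by simp
  qed
  then obtain z where z: "\<forall>t\<in>coords. z t \<in> {0..1}" and near: "\<forall>t\<in>coords. \<bar>z t - G z t\<bar> \<le> \<delta> / lip_retract"
    by (auto simp: abs_minus_commute)
  have "retract (G z) = smoothed_br \<theta> (retract z)"
    unfolding G_def by (intro retract_flatten smoothed_br_joint_policy \<theta>)
  then have "pol_dist U (retract z) (smoothed_br \<theta> (retract z)) = pol_dist U (retract z) (retract (G z))"
    by simp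
  also have "\<dots> \<le> lip_retract * (\<delta> / lip_retract)"
    using z near unfolding G_def by (intro pol_dist_retract_le flatten_unit_cube smoothed_br_joint_policy \<theta>)
  also have "\<dots> = \<delta>" using \<open>1 \<le> lip_retract\<close> by simp
  finally show ?thesis using retract_joint_policy[OF z] by blast
qed

lemma eps_equilibriaI:
  assumes "\<gamma> \<in> JP" and "\<And>i \<pi> s. \<pi> \<in> policies U i \<Longrightarrow> J i \<gamma> s \<le> J i (\<gamma>(i := \<pi>)) s + \<epsilon>"
  shows "\<gamma> \<in> eps_equilibria U P c beta \<epsilon>"
  unfolding eps_equilibria_def eps_best_response_def
proof (intro CollectI conjI assms(1) allI)
  fix i x
  have "J i \<gamma> x - \<epsilon> \<le> (INF \<pi>\<in>policies U i. J i (\<gamma>(i := \<pi>)) x)"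
    using assms joint_policy_mem[OF assms(1), of i] by (intro cINF_greatest) (auto simp: diff_le_eq)
  then show "J i \<gamma> x \<le> (INF \<pi>\<in>policies U i. J i (\<gamma>(i := \<pi>)) x) + \<epsilon>" by simp
qed

lemma eps_equilibria_joint_policy: "\<gamma> \<in> eps_equilibria U P c beta \<epsilon> \<Longrightarrow> \<gamma> \<in> JP"
  by (simp add: eps_equilibria_def)

lemma eps_equilibriaD:
  assumes "\<gamma> \<in> eps_equilibria U P c beta \<epsilon>" and \<pi>: "\<pi> \<in> policies U i"
  shows "J i \<gamma> s \<le> J i (\<gamma>(i := \<pi>)) s + \<epsilon>"
proof -
  have \<gamma>: "\<gamma> \<in> JP" using assms(1) by (rule eps_equilibria_joint_policy)
  have "- (cost_bound / (1 - beta i)) \<le> J i (\<gamma>(i := \<sigma>)) s" if "\<sigma> \<in> policies U i" for \<sigma>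
    using abs_le_D2[OF abs_J_le[OF joint_policy_fun_upd[OF \<gamma> that], where i = i and s = s]] by linarith
  then have "bdd_below ((\<lambda>\<sigma>. J i (\<gamma>(i := \<sigma>)) s) ` policies U i)"
    by (rule bdd_belowI2)
  then have "(INF \<sigma>\<in>policies U i. J i (\<gamma>(i := \<sigma>)) s) \<le> J i (\<gamma>(i := \<pi>)) s"
    using \<pi> by (rule cINF_lower)
  moreover have "J i \<gamma> s \<le> (INF \<sigma>\<in>policies U i. J i (\<gamma>(i := \<sigma>)) s) + \<epsilon>"
    using assms(1) by (simp add: eps_equilibria_def eps_best_response_def)
  ultimately show ?thesis by linarith
qed

lemma exists_eps_equilibrium:
  assumes "\<epsilon> > 0"
  shows "\<exists>\<gamma>. \<gamma> \<in> eps_equilibria U P c beta \<epsilon>"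
proof -
  define \<theta> where "\<theta> i = \<epsilon> * (1 - beta i) / 2" for i
  have \<theta>: "\<theta> i > 0" for i unfolding \<theta>_def using assms beta_less_1[of i] by simp
  obtain \<delta> where "\<delta> > 0" and \<delta>: "\<And>i. (card (U i) * bound_Q i) * \<delta> \<le> \<theta> i"
    using exists_pos_mult_le[where \<theta> = \<theta> and K = "\<lambda>i. card (U i) * bound_Q i", OF \<theta>] by blast
  obtain \<gamma> where \<gamma>: "\<gamma> \<in> JP" and near: "pol_dist U \<gamma> (smoothed_br \<theta> \<gamma>) \<le> \<delta>"
    using exists_near_fixpoint_smoothed_br[where \<theta> = \<theta>, OF \<theta> \<open>\<delta> > 0\<close>] by blast
  have "\<gamma> \<in> eps_equilibria U P c beta \<epsilon>"
  proof (rule eps_equilibriaI[OF \<gamma>])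
    fix i and \<pi> :: "'x \<Rightarrow> 'a \<Rightarrow> real" and s assume \<pi>: "\<pi> \<in> policies U i"
    have "card (U i) * pol_dist U \<gamma> (smoothed_br \<theta> \<gamma>) * bound_Q i \<le> card (U i) * \<delta> * bound_Q i"
      using near bound_Q_nonneg[of i] by (intro mult_right_mono mult_left_mono) auto
    also have "\<dots> = (card (U i) * bound_Q i) * \<delta>" by (simp only: mult_ac)
    also have "\<dots> \<le> \<theta> i" by (rule \<delta>)
    finally have "(\<theta> i + card (U i) * pol_dist U \<gamma> (smoothed_br \<theta> \<gamma>) * bound_Q i) / (1 - beta i)
        \<le> (2 * \<theta> i) / (1 - beta i)"
      using beta_less_1[of i] by (intro divide_right_mono) auto
    also have "\<dots> = \<epsilon>" unfolding \<theta>_def using beta_less_1[of i] by (simp add: field_simps)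
    finally show "J i \<gamma> s \<le> J i (\<gamma>(i := \<pi>)) s + \<epsilon>"
      using J_le_deviation_add[where \<theta> = \<theta>, OF \<theta> \<gamma> \<pi>, of s] by linarith
  qed
  then show ?thesis by blast
qed

lemma eps_equilibria_perturb:
  assumes \<gamma>: "\<gamma> \<in> eps_equilibria U P c beta \<eta>" and \<pi>: "\<pi> \<in> JP"
    and "pol_dist U \<gamma> \<pi> \<le> \<xi>" and "\<And>i. \<eta> + 2 * lip_J i * \<xi> \<le> \<epsilon>"
  shows "\<pi> \<in> eps_equilibria U P c beta \<epsilon>"
proof (rule eps_equilibriaI[OF \<pi>])
  fix i and \<sigma> :: "'x \<Rightarrow> 'a \<Rightarrow> real" and s assume \<sigma>: "\<sigma> \<in> policies U i"
  have "\<gamma> \<in> JP" using \<gamma> by (rule eps_equilibria_joint_policy)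
  have lip: "J i \<gamma>' s \<le> J i \<gamma>'' s + lip_J i * \<xi>"
    if "\<gamma>' \<in> JP" "\<gamma>'' \<in> JP" "pol_dist U \<gamma>' \<gamma>'' \<le> \<xi>" for \<gamma>' \<gamma>''
    using J_le_J_add[OF that(1,2), of i s] mult_left_mono[OF that(3) lip_J_nonneg[of i]] by linarith
  have "pol_dist U \<pi> \<gamma> \<le> \<xi>" using assms(3) by (simp only: pol_dist_commute)
  then have "J i \<pi> s \<le> J i \<gamma> s + lip_J i * \<xi>" by (rule lip[OF \<pi> \<open>\<gamma> \<in> JP\<close>])
  moreover have "J i \<gamma> s \<le> J i (\<gamma>(i := \<sigma>)) s + \<eta>" using eps_equilibriaD[OF \<gamma> \<sigma>] .
  moreover have "J i (\<gamma>(i := \<sigma>)) s \<le> J i (\<pi>(i := \<sigma>)) s + lip_J i * \<xi>"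
    using pol_dist_fun_upd_le[where \<gamma> = \<gamma> and i = i and \<sigma> = \<sigma> and \<pi> = \<pi>] assms(3)
    by (intro lip joint_policy_fun_upd \<open>\<gamma> \<in> JP\<close> \<pi> \<sigma>) linarith
  ultimately show "J i \<pi> s \<le> J i (\<pi>(i := \<sigma>)) s + \<epsilon>" using assms(4)[of i] by linarith
qed

end

theorem corollary1:
  fixes U :: "'i::finite \<Rightarrow> 'a set"
    and P :: "'x::finite \<Rightarrow> ('i \<Rightarrow> 'a) \<Rightarrow> 'x \<Rightarrow> real"
    and c :: "'i \<Rightarrow> 'x \<Rightarrow> ('i \<Rightarrow> 'a) \<Rightarrow> real"
    and beta :: "'i \<Rightarrow> real"
    and \<epsilon> :: real
  assumes "valid_game U P beta"
    and "\<epsilon> > 0"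
  shows "\<exists>\<xi>>0. \<forall>Qz :: 'i \<Rightarrow> ('x \<Rightarrow> 'a \<Rightarrow> real) set.
           (\<forall>i. Qz i \<subseteq> policies U i \<and> finite (Qz i)) \<and>
           (\<forall>\<gamma>\<in>joint_policies U. \<exists>\<pi>. (\<forall>i. \<pi> i \<in> Qz i) \<and> pol_dist U \<gamma> \<pi> \<le> \<xi>)
           \<longrightarrow> (\<exists>\<pi>. (\<forall>i. \<pi> i \<in> Qz i) \<and> \<pi> \<in> eps_equilibria U P c beta \<epsilon>)"
proof -
  interpret discounted_game U P c beta by unfold_locales (rule assms(1))
  obtain \<gamma> where \<gamma>: "\<gamma> \<in> eps_equilibria U P c beta (\<epsilon> / 2)"
    using exists_eps_equilibrium[of "\<epsilon> / 2"] assms(2) by auto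
  obtain \<xi> where "\<xi> > 0" and \<xi>: "\<And>i. (2 * lip_J i) * \<xi> \<le> \<epsilon> / 2"
    using exists_pos_mult_le[where \<theta> = "\<lambda>_. \<epsilon> / 2" and K = "\<lambda>i. 2 * lip_J i"] assms(2) by auto
  show ?thesis
  proof (intro exI[of _ \<xi>] conjI \<open>\<xi> > 0\<close> allI impI)
    fix Qz :: "'i \<Rightarrow> ('x \<Rightarrow> 'a \<Rightarrow> real) set"
    assume Qz: "(\<forall>i. Qz i \<subseteq> policies U i \<and> finite (Qz i)) \<and>
      (\<forall>\<gamma>\<in>joint_policies U. \<exists>\<pi>. (\<forall>i. \<pi> i \<in> Qz i) \<and> pol_dist U \<gamma> \<pi> \<le> \<xi>)"
    moreover have "\<gamma> \<in> joint_policies U" using \<gamma> by (rule eps_equilibria_joint_policy)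
    ultimately obtain \<pi> where \<pi>: "\<forall>i. \<pi> i \<in> Qz i" and near: "pol_dist U \<gamma> \<pi> \<le> \<xi>" by blast
    have "\<pi> \<in> joint_policies U" using \<pi> Qz by (auto simp: joint_policies_def)
    moreover have "\<epsilon> / 2 + 2 * lip_J i * \<xi> \<le> \<epsilon>" for i using \<xi>[of i] by simp
    ultimately have "\<pi> \<in> eps_equilibria U P c beta \<epsilon>"
      by (rule eps_equilibria_perturb[OF \<gamma> _ near])
    then show "\<exists>\<pi>. (\<forall>i. \<pi> i \<in> Qz i) \<and> \<pi> \<in> eps_equilibria U P c beta \<epsilon>" using \<pi> by blast
  qed
qed

end
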